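(* Let $X$ be a $T_1$ space and $\mathcal{P}$ an ideal of closed subsets of $X$. Then $C(X)_\mathcal{P}$ is a regular ring (for every $f$ there is $g$ with $f=f^2g$) if and only if for every $Z\in Z_\mathcal{P}[X]$ there exists $P\in\mathcal{P}$ such that $Z\setminus P$ is a clopen subset of the subspace $X\setminus P$.
   Context: An ideal of closed subsets of $X$ is a family $\mathcal{P}$ of closed subsets closed under finite unions and under passing to closed subsets. $D_f$ is the set of discontinuity points of $f\in\mathbb{R}^X$; $C(X)_\mathcal{P}=\{f\in\mathbb{R}^X\colon\overline{D_f}\in\mathcal{P}\}$ with pointwise operations. For $f\in C(X)_\mathcal{P}$, $Z_\mathcal{P}(f)=\{x\colon f(x)=0\}$ and $Z_\mathcal{P}[X]$ is the set of all such zero sets. *)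

theory Defs
  imports "HOL-Analysis.Analysis"
begin

definition cont_at :: "'a topology \<Rightarrow> ('a \<Rightarrow> real) \<Rightarrow> 'a \<Rightarrow> bool" where
  "cont_at X f x \<longleftrightarrow>
     (\<forall>U. open U \<and> f x \<in> U \<longrightarrow> (\<exists>V. openin X V \<and> x \<in> V \<and> f ` V \<subseteq> U))"

definition disc_points :: "'a topology \<Rightarrow> ('a \<Rightarrow> real) \<Rightarrow> 'a set" where
  "disc_points X f = {x \<in> topspace X. \<not> cont_at X f x}"

definition closed_ideal :: "'a topology \<Rightarrow> 'a set set \<Rightarrow> bool" where
  "closed_ideal X \<P> \<longleftrightarrow>
     \<P> \<noteq> {} \<and> (\<forall>P\<in>\<P>. closedin X P) \<and>
     (\<forall>P\<in>\<P>. \<forall>Q\<in>\<P>. P \<union> Q \<in> \<P>) \<and>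
     (\<forall>P\<in>\<P>. \<forall>Q. closedin X Q \<and> Q \<subseteq> P \<longrightarrow> Q \<in> \<P>)"

text \<open>C(X)_P, with functions represented as total functions; only their values on
  topspace X matter.\<close>
definition CP :: "'a topology \<Rightarrow> 'a set set \<Rightarrow> ('a \<Rightarrow> real) set" where
  "CP X \<P> = {f. X closure_of (disc_points X f) \<in> \<P>}"

definition zero_set_P :: "'a topology \<Rightarrow> ('a \<Rightarrow> real) \<Rightarrow> 'a set" where
  "zero_set_P X f = {x \<in> topspace X. f x = 0}"

definition zero_sets_P :: "'a topology \<Rightarrow> 'a set set \<Rightarrow> 'a set set" where
  "zero_sets_P X \<P> = zero_set_P X ` CP X \<P>"

definition CP_regular :: "'a topology \<Rightarrow> 'a set set \<Rightarrow> bool" where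
  "CP_regular X \<P> \<longleftrightarrow>
     (\<forall>f\<in>CP X \<P>. \<exists>g\<in>CP X \<P>. \<forall>x\<in>topspace X. f x = (f x)^2 * g x)"

end

theory Submission
  imports Defs
begin

text \<open>If \<open>f = f\<^sup>2 g\<close>, then off a member \<open>P\<close> of the ideal both \<open>f\<close> and \<open>f g\<close> are continuous,
  and there the zero set of \<open>f\<close> is the preimage of \<open>0\<close> under \<open>f\<close> as well as the preimage of
  \<open>\<real> - {1}\<close> under \<open>f g\<close>, hence clopen. Conversely, \<open>g = 1/f\<close> (with \<open>1/0 = 0\<close>) is continuous
  wherever \<open>f\<close> is continuous and nonzero, and also on the open set \<open>Z(f) - P\<close> where it vanishes
  identically, so its discontinuities lie in a member of the ideal.\<close>

lemma cont_at_comp: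
  assumes "cont_at X f x" "isCont h (f x)"
  shows "cont_at X (\<lambda>y. h (f y)) x"
  unfolding cont_at_def
proof (intro allI impI)
  fix U :: "real set" assume "open U \<and> h (f x) \<in> U"
  then obtain U' where U': "open U'" "f x \<in> U'" "\<forall>t\<in>U'. h t \<in> U"
    using assms(2) continuous_at_open by metis
  then obtain V where "openin X V" "x \<in> V" "f ` V \<subseteq> U'"
    using assms(1) unfolding cont_at_def by metis
  then show "\<exists>V. openin X V \<and> x \<in> V \<and> (\<lambda>y. h (f y)) ` V \<subseteq> U"
    using U'(3) by (intro exI[of _ V]) auto
qed

lemma cont_at_locally_constant:
  assumes "openin X V" "x \<in> V" "\<forall>y\<in>V. f y = f x"
  shows "cont_at X f x"
  unfolding cont_at_def
proof (intro allI impI)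
  fix U :: "real set" assume "open U \<and> f x \<in> U"
  then have "f ` V \<subseteq> U"
    using assms(3) by auto
  then show "\<exists>W. openin X W \<and> x \<in> W \<and> f ` W \<subseteq> U"
    using assms(1,2) by blast
qed

lemma continuous_map_subtopology_if_cont_at:
  assumes "\<forall>x\<in>topspace X \<inter> S. cont_at X f x"
  shows "continuous_map (subtopology X S) euclideanreal f"
  unfolding continuous_map_eq_topcontinuous_at topcontinuous_at_def
proof (intro ballI conjI allI impI)
  fix x U assume x: "x \<in> topspace (subtopology X S)" and "openin euclideanreal U \<and> f x \<in> U"
  moreover have "cont_at X f x"
    using assms x by auto
  ultimately obtain V where "openin X V" "x \<in> V" "f ` V \<subseteq> U"
    unfolding cont_at_def by auto
  then show "\<exists>W. openin (subtopology X S) W \<and> x \<in> W \<and> (\<forall>y\<in>W. f y \<in> U)"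
    using x by (intro exI[of _ "V \<inter> S"]) (auto simp: openin_subtopology_Int)
qed (auto simp: Pi_iff)

lemma cont_at_outside_closure_disc_points:
  assumes "x \<in> topspace X" "x \<notin> X closure_of (disc_points X f)"
  shows "cont_at X f x"
  using assms closure_of_subset[of "disc_points X f" X] unfolding disc_points_def by auto

lemma closed_ideal_closedin: "closed_ideal X \<P> \<Longrightarrow> P \<in> \<P> \<Longrightarrow> closedin X P"
  unfolding closed_ideal_def by blast

lemma closed_ideal_Un: "closed_ideal X \<P> \<Longrightarrow> P \<in> \<P> \<Longrightarrow> Q \<in> \<P> \<Longrightarrow> P \<union> Q \<in> \<P>"
  unfolding closed_ideal_def by blast

lemma closed_ideal_closedin_subset:
  "closed_ideal X \<P> \<Longrightarrow> P \<in> \<P> \<Longrightarrow> closedin X Q \<Longrightarrow> Q \<subseteq> P \<Longrightarrow> Q \<in> \<P>"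
  unfolding closed_ideal_def by blast

lemma CP_iff_cont_at_off_member:
  assumes "closed_ideal X \<P>"
  shows "f \<in> CP X \<P> \<longleftrightarrow> (\<exists>P\<in>\<P>. \<forall>x\<in>topspace X - P. cont_at X f x)"
proof
  assume "f \<in> CP X \<P>"
  then have "X closure_of (disc_points X f) \<in> \<P>"
    by (simp add: CP_def)
  moreover have "\<forall>x\<in>topspace X - X closure_of (disc_points X f). cont_at X f x"
    by (simp add: cont_at_outside_closure_disc_points)
  ultimately show "\<exists>P\<in>\<P>. \<forall>x\<in>topspace X - P. cont_at X f x" ..
next
  assume "\<exists>P\<in>\<P>. \<forall>x\<in>topspace X - P. cont_at X f x"
  then obtain P where P: "P \<in> \<P>" and cont: "\<forall>x\<in>topspace X - P. cont_at X f x"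
    by blast
  have "disc_points X f \<subseteq> P"
    using cont unfolding disc_points_def by blast
  moreover have "closedin X P"
    using assms P by (rule closed_ideal_closedin)
  ultimately have "X closure_of (disc_points X f) \<subseteq> P"
    by (rule closure_of_minimal)
  then have "X closure_of (disc_points X f) \<in> \<P>"
    by (rule closed_ideal_closedin_subset[OF assms P closedin_closure_of])
  then show "f \<in> CP X \<P>"
    by (simp add: CP_def)
qed

lemma zero_set_clopen_if_regular_on:
  assumes f: "continuous_map (subtopology X S) euclideanreal f"
    and g: "continuous_map (subtopology X S) euclideanreal g"
    and fg: "\<forall>x\<in>topspace X. f x = (f x)^2 * g x"
    and S: "S \<subseteq> topspace X"
  shows "closedin (subtopology X S) (zero_set_P X f \<inter> S)"
    and "openin (subtopology X S) (zero_set_P X f \<inter> S)"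
proof -
  have top: "topspace (subtopology X S) = S"
    using S by auto
  have "zero_set_P X f \<inter> S = {x \<in> topspace (subtopology X S). f x \<in> {0}}"
    using S unfolding zero_set_P_def top by auto
  moreover have "closedin euclideanreal {0::real}"
    by simp
  ultimately show "closedin (subtopology X S) (zero_set_P X f \<inter> S)"
    using closedin_continuous_map_preimage[OF f] by presburger
  have "f x = 0 \<longleftrightarrow> f x * g x \<noteq> 1" if "x \<in> topspace X" for x
    using fg that by (cases "f x = 0") (auto simp: power2_eq_square)
  then have "zero_set_P X f \<inter> S = {x \<in> topspace (subtopology X S). f x * g x \<in> - {1}}"
    using S unfolding zero_set_P_def top by auto
  moreover have "openin euclideanreal (- {1::real})"
    by (simp add: open_Compl)
  ultimately show "openin (subtopology X S) (zero_set_P X f \<inter> S)"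
    using openin_continuous_map_preimage[OF continuous_map_real_mult[OF f g]] by presburger
qed

lemma cont_at_inverse_if_zero_set_open:
  assumes "cont_at X f x" "openin X U" "U \<subseteq> zero_set_P X f" "f x = 0 \<Longrightarrow> x \<in> U"
  shows "cont_at X (\<lambda>y. inverse (f y)) x"
proof (cases "f x = 0")
  case True
  have "\<forall>y\<in>U. inverse (f y) = inverse (f x)"
    using assms(3) True by (auto simp: zero_set_P_def)
  then show ?thesis
    using cont_at_locally_constant[OF assms(2) assms(4)[OF True]] by simp
next
  case False
  then have "isCont inverse (f x)"
    by (intro continuous_intros) auto
  then show ?thesis
    by (rule cont_at_comp[OF assms(1)])
qed

lemma zero_set_clopen_off_member_if_CP_regular:
  assumes "closed_ideal X \<P>" "CP_regular X \<P>" "Z \<in> zero_sets_P X \<P>"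
  shows "\<exists>P\<in>\<P>. closedin (subtopology X (topspace X - P)) (Z - P) \<and>
    openin (subtopology X (topspace X - P)) (Z - P)"
proof -
  obtain f where f: "f \<in> CP X \<P>" and Z: "Z = zero_set_P X f"
    using assms(3) unfolding zero_sets_P_def by auto
  then obtain g where g: "g \<in> CP X \<P>" and fg: "\<forall>x\<in>topspace X. f x = (f x)^2 * g x"
    using assms(2) unfolding CP_regular_def by auto
  obtain Pf where Pf: "Pf \<in> \<P>" "\<forall>x\<in>topspace X - Pf. cont_at X f x"
    using f CP_iff_cont_at_off_member[OF assms(1)] by blast
  obtain Pg where Pg: "Pg \<in> \<P>" "\<forall>x\<in>topspace X - Pg. cont_at X g x"
    using g CP_iff_cont_at_off_member[OF assms(1)] by blast
  define P where "P = Pf \<union> Pg"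
  have P: "P \<in> \<P>"
    unfolding P_def using assms(1) Pf(1) Pg(1) by (rule closed_ideal_Un)
  have "continuous_map (subtopology X (topspace X - P)) euclideanreal f"
    and "continuous_map (subtopology X (topspace X - P)) euclideanreal g"
    using Pf Pg unfolding P_def by (auto intro!: continuous_map_subtopology_if_cont_at)
  note clopen = zero_set_clopen_if_regular_on[OF this fg Diff_subset]
  have "Z - P = zero_set_P X f \<inter> (topspace X - P)"
    unfolding Z by (auto simp: zero_set_P_def)
  with P clopen show ?thesis
    by (intro bexI[of _ P]) simp_all
qed

lemma inverse_in_CP_if_zero_set_open_off_member:
  assumes "closed_ideal X \<P>" "f \<in> CP X \<P>" "P \<in> \<P>"
    and "openin (subtopology X (topspace X - P)) (zero_set_P X f - P)"
  shows "(\<lambda>x. inverse (f x)) \<in> CP X \<P>"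
proof -
  have "openin X (topspace X - P)"
    using closed_ideal_closedin[OF assms(1,3)] by (simp add: closedin_def)
  with assms(4) have U: "openin X (zero_set_P X f - P)"
    by (rule openin_trans_full)
  obtain Pf where Pf: "Pf \<in> \<P>" "\<forall>x\<in>topspace X - Pf. cont_at X f x"
    using assms(2) CP_iff_cont_at_off_member[OF assms(1)] by blast
  have "cont_at X (\<lambda>y. inverse (f y)) x" if x: "x \<in> topspace X - (Pf \<union> P)" for x
  proof (rule cont_at_inverse_if_zero_set_open[OF _ U])
    show "cont_at X f x"
      using x Pf(2) by blast
    show "f x = 0 \<Longrightarrow> x \<in> zero_set_P X f - P"
      using x by (simp add: zero_set_P_def)
  qed blast
  moreover have "Pf \<union> P \<in> \<P>"
    using assms(1) Pf(1) assms(3) by (rule closed_ideal_Un)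
  ultimately show ?thesis
    using CP_iff_cont_at_off_member[OF assms(1)] by blast
qed

lemma CP_regular_if_zero_sets_open_off_members:
  assumes "closed_ideal X \<P>"
    and "\<forall>Z\<in>zero_sets_P X \<P>. \<exists>P\<in>\<P>. openin (subtopology X (topspace X - P)) (Z - P)"
  shows "CP_regular X \<P>"
  unfolding CP_regular_def
proof
  fix f assume f: "f \<in> CP X \<P>"
  then obtain P where "P \<in> \<P>" "openin (subtopology X (topspace X - P)) (zero_set_P X f - P)"
    using assms(2) unfolding zero_sets_P_def by blast
  then have "(\<lambda>x. inverse (f x)) \<in> CP X \<P>"
    by (rule inverse_in_CP_if_zero_set_open_off_member[OF assms(1) f])
  moreover have "f x = (f x)^2 * inverse (f x)" for x
    by (cases "f x = 0") (simp_all add: power2_eq_square)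
  ultimately show "\<exists>g\<in>CP X \<P>. \<forall>x\<in>topspace X. f x = (f x)^2 * g x"
    by (intro bexI[of _ "\<lambda>x. inverse (f x)"]) auto
qed

theorem theorem6p4:
  fixes X :: "'a topology" and \<P> :: "'a set set"
  assumes "t1_space X" and "closed_ideal X \<P>"
  shows "CP_regular X \<P> \<longleftrightarrow>
    (\<forall>Z\<in>zero_sets_P X \<P>. \<exists>P\<in>\<P>.
        closedin (subtopology X (topspace X - P)) (Z - P) \<and>
        openin (subtopology X (topspace X - P)) (Z - P))"
  using zero_set_clopen_off_member_if_CP_regular[OF assms(2)]
    CP_regular_if_zero_sets_open_off_members[OF assms(2)]
  by meson

end
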